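(* Let $\rho$ be a full-rank density operator on a finite-dimensional Hilbert space, let $H$ be a Hermitian operator, and set $\rho_\theta = e^{-i\theta H}\rho\, e^{i\theta H}$. Define $\Lambda_\theta=(\partial_\theta\rho_\theta)\rho_\theta^{-1}$, so that $\Lambda_\theta^\dagger=\rho_\theta^{-1}\partial_\theta\rho_\theta$. Then the sub-QFI satisfies $$\mathcal{I}(\rho_\theta)=2\,\mathrm{Tr}\big[\Lambda_\theta^\dagger\Lambda_\theta\rho_\theta^2\big].$$
   Context: The sub-QFI is $\mathcal{I}(\rho_\theta)=8\lim_{\delta\to 0}\frac{1-\sqrt{G(\rho_\theta,\rho_{\theta+\delta})}}{\delta^2}$, where for density operators $\rho,\sigma$ the super-fidelity is $G(\rho,\sigma)=\mathrm{Tr}[\rho\sigma]+\sqrt{(1-\mathrm{Tr}[\rho^2])(1-\mathrm{Tr}[\sigma^2])}$. *)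

theory Defs
  imports "HOL-Analysis.Analysis"
begin

definition cadj :: "complex^'n^'n \<Rightarrow> complex^'n^'n" where
  "cadj A = (\<chi> i j. cnj (A $ j $ i))"

definition csmat :: "complex \<Rightarrow> complex^'n^'n \<Rightarrow> complex^'n^'n" where
  "csmat c A = (\<chi> i j. c * A $ i $ j)"

fun mpow :: "complex^'n^'n \<Rightarrow> nat \<Rightarrow> complex^'n^'n" where
  "mpow A 0 = mat 1"
| "mpow A (Suc k) = A ** mpow A k"

definition mexp :: "complex^'n^'n \<Rightarrow> complex^'n^'n" where
  "mexp A = (\<Sum>k. scaleR (inverse (fact k)) (mpow A k))"

definition hermitian :: "complex^'n^'n \<Rightarrow> bool" where
  "hermitian A \<longleftrightarrow> cadj A = A"

definition qform :: "complex^'n^'n \<Rightarrow> complex^'n \<Rightarrow> complex" where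
  "qform A x = (\<Sum>i\<in>UNIV. \<Sum>j\<in>UNIV. cnj (x $ i) * A $ i $ j * x $ j)"

definition density_op :: "complex^'n^'n \<Rightarrow> bool" where
  "density_op \<rho> \<longleftrightarrow> hermitian \<rho> \<and>
     (\<forall>x. Im (qform \<rho> x) = 0 \<and> 0 \<le> Re (qform \<rho> x)) \<and> trace \<rho> = 1"

text \<open>Super-fidelity G(rho,sigma) = Tr[rho sigma] + sqrt((1-Tr[rho^2])(1-Tr[sigma^2])).
  For density operators all traces involved are real; we take real parts.\<close>
definition super_fidelity :: "complex^'n^'n \<Rightarrow> complex^'n^'n \<Rightarrow> real" where
  "super_fidelity \<rho> \<sigma> = Re (trace (\<rho> ** \<sigma>)) +
      sqrt ((1 - Re (trace (\<rho> ** \<rho>))) * (1 - Re (trace (\<sigma> ** \<sigma>))))"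

end

theory Submission
  imports Defs
begin

(* Write K = -iH, so that rho_t = e^{tK} rho e^{-tK} with K anti-Hermitian and
   d/dt rho_t = [K, rho_t].  Conjugation preserves the purity p = Tr rho^2 <= 1, hence the
   square-root term of G(rho_theta, rho_{theta+delta}) is the constant 1 - p and
   G = 1 + f(delta) - f(0) with f(delta) = Tr[rho_theta rho_{theta+delta}].  By cyclicity of
   the trace f'(0) = Tr(rho_theta [K, rho_theta]) = 0 and f''(0) = -Tr(D^2) for the Hermitian
   D = [K, rho_theta] = d/dtheta rho_theta, so 1 - sqrt G ~ delta^2 Tr(D^2) / 4 and the limit
   is 2 Tr(D^2).  On the other side Lambda^dagger Lambda rho^2 = rho^-1 D^2 rho, whose trace is
   again Tr(D^2). *)

lemma matrix_add_rdistrib: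
  fixes A B :: "'a::semiring_1^'n^'m"
  shows "(A + B) ** C = A ** C + B ** C"
  by (simp add: vec_eq_iff matrix_matrix_mult_def sum.distrib distrib_right)

lemma matrix_diff_ldistrib:
  fixes A :: "'a::ring_1^'n^'m"
  shows "A ** (B - C) = A ** B - A ** C"
  by (simp add: vec_eq_iff matrix_matrix_mult_def sum_subtractf right_diff_distrib)

lemma matrix_diff_rdistrib:
  fixes A B :: "'a::ring_1^'n^'m"
  shows "(A - B) ** C = A ** C - B ** C"
  by (simp add: vec_eq_iff matrix_matrix_mult_def sum_subtractf left_diff_distrib)

lemma matrix_mul_uminus_left:
  fixes A :: "'a::ring_1^'n^'m"
  shows "- A ** B = - (A ** B)"
  by (simp add: vec_eq_iff matrix_matrix_mult_def sum_negf)

lemma matrix_mul_uminus_right: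
  fixes A :: "'a::ring_1^'n^'m"
  shows "A ** - B = - (A ** B)"
  by (simp add: vec_eq_iff matrix_matrix_mult_def sum_negf)

lemma scaleR_matrix_vector_mult:
  fixes A :: "'a::real_algebra_1^'n^'m"
  shows "(r *\<^sub>R A) *v x = r *\<^sub>R (A *v x)"
  by (simp add: vec_eq_iff matrix_vector_mult_def scaleR_sum_right)

lemma trace_uminus: "trace (- A) = - trace (A::'a::ring_1^'n^'n)"
  by (simp add: trace_def sum_negf)

lemma trace_scaleR: "trace (r *\<^sub>R A) = r *\<^sub>R trace (A::'a::real_algebra_1^'n^'n)"
  by (simp add: trace_def scaleR_sum_right)

lemma matrix_mul_matrix_inv:
  assumes "invertible (A::'a::semiring_1^'n^'n)"
  shows "A ** matrix_inv A = mat 1" and "matrix_inv A ** A = mat 1"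
  using someI_ex[OF assms[unfolded invertible_def]] by (simp_all add: matrix_inv_def)

lemma bounded_bilinear_matrix_matrix_mult:
  "bounded_bilinear ((**) :: complex^'n^'m \<Rightarrow> complex^'p^'n \<Rightarrow> complex^'p^'m)"
  unfolding bilinear_conv_bounded_bilinear[symmetric] bilinear_def
proof (intro allI conjI linearI)
  fix A B :: "complex^'n^'m" and C D :: "complex^'p^'n" and r :: real
  show "(A + B) ** C = A ** C + B ** C" "A ** (C + D) = A ** C + A ** D"
    by (simp_all add: matrix_add_ldistrib matrix_add_rdistrib)
  show "(r *\<^sub>R A) ** C = r *\<^sub>R (A ** C)" "A ** (r *\<^sub>R C) = r *\<^sub>R (A ** C)"
    by (simp_all add: scalar_matrix_assoc matrix_scalar_ac)
qed

lemma norm_axis_1_complex: "norm (axis j (1::complex) :: complex^'n) = 1"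
  by (simp add: norm_vec_def L2_set_def axis_def if_distrib[of "\<lambda>x. (cmod x)\<^sup>2"] cong: if_cong)

lemma matrix_entry_le_onorm: "norm (A $ i $ j) \<le> onorm ((*v) (A::complex^'n^'m))"
proof -
  have "A $ i $ j = (A *v axis j 1) $ i"
    by (simp add: matrix_vector_mult_def axis_def if_distrib cong: if_cong)
  also have "norm \<dots> \<le> norm (A *v axis j 1)"
    by (rule Finite_Cartesian_Product.norm_nth_le)
  also have "\<dots> \<le> onorm ((*v) A) * norm (axis j (1::complex))"
    by (rule onorm) simp
  finally show ?thesis
    by (simp add: norm_axis_1_complex)
qed

lemma norm_le_onorm_matrix_vector_mult:
  "norm (A::complex^'n^'m) \<le> onorm ((*v) A) * norm (\<chi> (i::'m) (j::'n). (1::complex))"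
proof -
  have "norm A \<le> norm (onorm ((*v) A) *\<^sub>R (\<chi> (i::'m) (j::'n). (1::complex)))"
    by (intro norm_le_componentwise_cart) (simp add: matrix_entry_le_onorm onorm_pos_le)
  then show ?thesis
    by (simp add: onorm_pos_le)
qed

lemma onorm_matrix_vector_mult_add:
  "onorm ((*v) ((A::complex^'n^'m) + B)) \<le> onorm ((*v) A) + onorm ((*v) B)"
proof -
  have "(*v) (A + B) = (\<lambda>x. A *v x + B *v x)"
    by (simp add: fun_eq_iff matrix_vector_mult_add_rdistrib)
  then show ?thesis
    by (simp add: onorm_triangle)
qed

lemma onorm_matrix_vector_mult_scaleR:
  "onorm ((*v) (r *\<^sub>R (A::complex^'n^'m))) = \<bar>r\<bar> * onorm ((*v) A)"
proof -
  have "(*v) (r *\<^sub>R A) = (\<lambda>x. r *\<^sub>R (A *v x))"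
    by (simp add: fun_eq_iff scaleR_matrix_vector_mult)
  then show ?thesis
    by (simp add: onorm_scaleR)
qed

lemma onorm_matrix_matrix_mult:
  "onorm ((*v) ((A::complex^'n^'m) ** (B::complex^'p^'n))) \<le> onorm ((*v) A) * onorm ((*v) B)"
proof -
  have "(*v) (A ** B) = (*v) A \<circ> (*v) B"
    by (simp add: fun_eq_iff matrix_vector_mul_assoc)
  then show ?thesis
    by (simp add: onorm_compose)
qed

(* Square complex matrices with the operator norm form a Banach algebra; this copy of the
   matrix type gives mexp access to the library's exponential and its derivative. *)

typedef (overloaded) 'n cmat = "UNIV :: (complex^'n::finite^'n) set"
  morphisms from_cmat to_cmat ..

setup_lifting type_definition_cmat

instantiation cmat :: (finite) real_normed_vector
begin

lift_definition zero_cmat :: "'a cmat" is 0 .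
lift_definition plus_cmat :: "'a cmat \<Rightarrow> 'a cmat \<Rightarrow> 'a cmat" is "(+)" .
lift_definition minus_cmat :: "'a cmat \<Rightarrow> 'a cmat \<Rightarrow> 'a cmat" is "(-)" .
lift_definition uminus_cmat :: "'a cmat \<Rightarrow> 'a cmat" is uminus .
lift_definition scaleR_cmat :: "real \<Rightarrow> 'a cmat \<Rightarrow> 'a cmat" is scaleR .
lift_definition norm_cmat :: "'a cmat \<Rightarrow> real" is "\<lambda>A. onorm ((*v) A)" .

definition dist_cmat :: "'a cmat \<Rightarrow> 'a cmat \<Rightarrow> real"
  where "dist_cmat A B = norm (A - B)"

definition sgn_cmat :: "'a cmat \<Rightarrow> 'a cmat"
  where "sgn_cmat A = inverse (norm A) *\<^sub>R A"

definition uniformity_cmat :: "('a cmat \<times> 'a cmat) filter"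
  where "uniformity_cmat = (INF e\<in>{0<..}. principal {(A, B). dist A B < e})"

definition open_cmat :: "'a cmat set \<Rightarrow> bool"
  where "open_cmat U \<longleftrightarrow> (\<forall>A\<in>U. \<forall>\<^sub>F (A', B) in uniformity. A' = A \<longrightarrow> B \<in> U)"

instance
proof
  fix A B :: "'a cmat" and r :: real
  show "norm A = 0 \<longleftrightarrow> A = 0"
    by transfer (simp add: onorm_eq_0 matrix_eq[where B = 0])
  show "norm (A + B) \<le> norm A + norm B"
    by transfer (rule onorm_matrix_vector_mult_add)
  show "norm (r *\<^sub>R A) = \<bar>r\<bar> * norm A"
    by transfer (rule onorm_matrix_vector_mult_scaleR)
qed (transfer;
    simp add: algebra_simps dist_cmat_def sgn_cmat_def uniformity_cmat_def open_cmat_def)+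

end

instantiation cmat :: (finite) ring_1
begin

lift_definition one_cmat :: "'a cmat" is "mat 1" .
lift_definition times_cmat :: "'a cmat \<Rightarrow> 'a cmat \<Rightarrow> 'a cmat" is "(**)" .

instance
proof
  fix A B C :: "'a cmat"
  show "A * B * C = A * (B * C)"
    by transfer (simp add: matrix_mul_assoc)
  show "1 * A = A" "A * 1 = A"
    by (transfer; simp)+
  show "(A + B) * C = A * C + B * C" "A * (B + C) = A * B + A * C"
    by (transfer; simp add: matrix_add_ldistrib matrix_add_rdistrib)+
  show "(0::'a cmat) \<noteq> 1"
    by transfer (simp add: vec_eq_iff mat_def)
qed

end

instance cmat :: (finite) real_normed_algebra_1
proof
  fix A B :: "'a cmat" and r :: real
  show "r *\<^sub>R A * B = r *\<^sub>R (A * B)" "A * r *\<^sub>R B = r *\<^sub>R (A * B)"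
    by (transfer; simp add: scalar_matrix_assoc matrix_scalar_ac)+
  show "norm (A * B) \<le> norm A * norm B"
    by transfer (rule onorm_matrix_matrix_mult)
  show "norm (1::'a cmat) = 1"
    by transfer (simp add: matrix_vector_mul_lid[abs_def] onorm_id)
qed

lemma bounded_linear_from_cmat: "bounded_linear (from_cmat :: 'n::finite cmat \<Rightarrow> _)"
proof (rule bounded_linear_intro)
  fix A B :: "'n cmat" and r :: real
  show "from_cmat (A + B) = from_cmat A + from_cmat B" "from_cmat (r *\<^sub>R A) = r *\<^sub>R from_cmat A"
    by (transfer; simp)+
  show "norm (from_cmat A) \<le> norm A * norm (\<chi> (i::'n) (j::'n). (1::complex))"
    by transfer (rule norm_le_onorm_matrix_vector_mult)
qed

lemma bounded_linear_to_cmat: "bounded_linear (to_cmat :: _ \<Rightarrow> 'n::finite cmat)"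
proof -
  have "linear (to_cmat :: _ \<Rightarrow> 'n cmat)"
    by (rule linearI) (simp_all add: plus_cmat.abs_eq scaleR_cmat.abs_eq)
  then show ?thesis
    by (simp add: linear_conv_bounded_linear)
qed

instance cmat :: (finite) banach
proof
  fix X :: "nat \<Rightarrow> 'a cmat"
  assume "Cauchy X"
  then have "Cauchy (\<lambda>k. from_cmat (X k))"
    by (rule bounded_linear.Cauchy[OF bounded_linear_from_cmat])
  then obtain L where "(\<lambda>k. from_cmat (X k)) \<longlonglongrightarrow> L"
    by (auto simp: Cauchy_convergent_iff convergent_def)
  then have "(\<lambda>k. to_cmat (from_cmat (X k))) \<longlonglongrightarrow> to_cmat L"
    by (rule bounded_linear.tendsto[OF bounded_linear_to_cmat])
  then have "X \<longlonglongrightarrow> to_cmat L"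
    by (simp add: from_cmat_inverse)
  then show "convergent X"
    by (auto simp: convergent_def)
qed

lemma from_cmat_mult: "from_cmat (A * B) = from_cmat A ** from_cmat B"
  by transfer simp

lemma from_cmat_power: "from_cmat (A ^ k) = mpow (from_cmat A) k"
  by (induction k) (simp_all add: one_cmat.rep_eq from_cmat_mult)

lemma mexp_eq_exp: "mexp A = from_cmat (exp (to_cmat A))"
proof -
  have "from_cmat (exp (to_cmat A)) = (\<Sum>k. from_cmat (to_cmat A ^ k /\<^sub>R fact k))"
    unfolding exp_def
    by (rule bounded_linear.suminf[OF bounded_linear_from_cmat summable_exp_generic])
  then show ?thesis
    by (simp add: mexp_def scaleR_cmat.rep_eq from_cmat_power to_cmat_inverse)
qed

lemma mexp_scaleR_eq_exp: "mexp (t *\<^sub>R A) = from_cmat (exp (t *\<^sub>R to_cmat A))"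
  by (simp add: mexp_eq_exp scaleR_cmat.abs_eq)

lemma mexp_scaleR_has_vector_derivative_left:
  "((\<lambda>t. mexp (t *\<^sub>R A)) has_vector_derivative A ** mexp (t *\<^sub>R A)) (at t)"
  using bounded_linear.has_vector_derivative[OF bounded_linear_from_cmat
      exp_scaleR_has_vector_derivative_left[of "to_cmat A"]]
  by (simp add: mexp_scaleR_eq_exp from_cmat_mult to_cmat_inverse)

lemma mexp_scaleR_has_vector_derivative_right:
  "((\<lambda>t. mexp (t *\<^sub>R A)) has_vector_derivative mexp (t *\<^sub>R A) ** A) (at t)"
  using bounded_linear.has_vector_derivative[OF bounded_linear_from_cmat
      exp_scaleR_has_vector_derivative_right[of "to_cmat A"]]
  by (simp add: mexp_scaleR_eq_exp from_cmat_mult to_cmat_inverse)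

lemma mexp_mult_mexp_uminus: "mexp A ** mexp (- A) = mat 1"
proof -
  have "from_cmat (exp (to_cmat A) * exp (- to_cmat A)) = mat 1"
    by (simp add: exp_minus_inverse one_cmat.rep_eq)
  then show ?thesis
    by (simp add: mexp_eq_exp from_cmat_mult uminus_cmat.abs_eq)
qed

lemma invertible_mexp: "invertible (mexp A)"
  unfolding invertible_def using mexp_mult_mexp_uminus[of A] mexp_mult_mexp_uminus[of "- A"] by auto

lemma summable_mexp: "summable (\<lambda>k. inverse (fact k) *\<^sub>R mpow (A::complex^'n^'n) k)"
  using bounded_linear.summable[OF bounded_linear_from_cmat summable_exp_generic[of "to_cmat A"]]
  by (simp add: scaleR_cmat.rep_eq from_cmat_power to_cmat_inverse)

lemma cadj_mult: "cadj ((A::complex^'n^'n) ** B) = cadj B ** cadj A"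
  by (simp add: vec_eq_iff cadj_def matrix_matrix_mult_def mult.commute)

lemma cadj_mat_1: "cadj (mat 1 :: complex^'n^'n) = mat 1"
  by (simp add: vec_eq_iff cadj_def mat_def)

lemma cadj_diff: "cadj (A - B) = cadj A - cadj (B::complex^'n^'n)"
  by (simp add: vec_eq_iff cadj_def)

lemma cadj_uminus: "cadj (- A) = - cadj (A::complex^'n^'n)"
  by (simp add: vec_eq_iff cadj_def)

lemma linear_cadj: "linear (cadj :: complex^'n^'n \<Rightarrow> complex^'n^'n)"
  by (rule linearI) (simp_all add: vec_eq_iff cadj_def)

lemma trace_cadj: "trace (cadj A) = cnj (trace (A::complex^'n^'n))"
  by (simp add: trace_def cadj_def)

lemma mpow_commute: "A ** mpow A k = mpow A k ** A"
  by (induction k) (simp_all add: matrix_mul_assoc)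

lemma cadj_mpow: "cadj (mpow A k) = mpow (cadj A) k"
  by (induction k) (simp_all add: cadj_mult cadj_mat_1 mpow_commute)

lemma cadj_mexp: "cadj (mexp A) = mexp (cadj A)"
  using bounded_linear.suminf[OF linear_cadj[unfolded linear_conv_bounded_linear] summable_mexp]
  by (simp add: mexp_def linear_cmul[OF linear_cadj] cadj_mpow)

lemma hermitian_trace_real:
  assumes "hermitian A"
  shows "trace A = of_real (Re (trace A))"
proof -
  have "cnj (trace A) = trace A"
    using assms by (simp add: hermitian_def flip: trace_cadj)
  then show ?thesis
    by (simp add: complex_eq_iff)
qed

lemma hermitian_matrix_inv:
  assumes "hermitian A" and "invertible A"
  shows "hermitian (matrix_inv A)"
proof -
  have "cadj (matrix_inv A) = cadj (matrix_inv A) ** (A ** matrix_inv A)"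
    by (simp add: matrix_mul_matrix_inv assms)
  also have "\<dots> = cadj (A ** matrix_inv A) ** matrix_inv A"
    using assms(1) by (simp add: matrix_mul_assoc cadj_mult hermitian_def)
  finally show ?thesis
    by (simp add: matrix_mul_matrix_inv assms hermitian_def cadj_mat_1)
qed

definition commutator :: "complex^'n^'n \<Rightarrow> complex^'n^'n \<Rightarrow> complex^'n^'n"
  where "commutator A B = A ** B - B ** A"

lemma commutator_swap: "commutator A B = - commutator B A"
  by (simp add: commutator_def)

lemma bounded_linear_commutator: "bounded_linear (commutator K)"
  unfolding linear_conv_bounded_linear[symmetric]
  by (rule linearI) (simp_all add: commutator_def matrix_add_ldistrib matrix_add_rdistrib
      scalar_matrix_assoc matrix_scalar_ac scaleR_diff_right)

lemma hermitian_commutator: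
  assumes "cadj K = - K" and "hermitian \<sigma>"
  shows "hermitian (commutator K \<sigma>)"
  using assms by (simp add: hermitian_def commutator_def cadj_diff cadj_mult
      matrix_mul_uminus_left matrix_mul_uminus_right)

lemma trace_mult_commutator_self: "trace (A ** commutator B A) = 0"
  using trace_mul_sym[of "A ** B" A]
  by (simp add: commutator_def matrix_diff_ldistrib trace_sub matrix_mul_assoc)

lemma trace_mult_commutator: "trace (A ** commutator B C) = trace (commutator A B ** C)"
  using trace_mul_sym[of "A ** C" B]
  by (simp add: commutator_def matrix_diff_ldistrib matrix_diff_rdistrib trace_sub matrix_mul_assoc)

lemma qform_two_point:
  "qform A (\<chi> k. (if k = i then a else 0) + (if k = j then b else 0))
     = cnj a * A$i$i * a + cnj a * A$i$j * b + cnj b * A$j$i * a + cnj b * A$j$j * b"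
  by (simp add: qform_def distrib_left distrib_right sum.distrib if_distrib[of cnj]
      if_distrib[of "\<lambda>x. x * y" for y] if_distrib[of "\<lambda>x. y * x" for y] cong: if_cong)

lemma hermitian_entry:
  assumes "hermitian A"
  shows "A $ j $ i = cnj (A $ i $ j)"
proof -
  have "cnj (A $ i $ j) = cadj A $ j $ i"
    by (simp add: cadj_def)
  then show ?thesis
    using assms by (simp add: hermitian_def)
qed

lemma density_op_diag_nonneg:
  assumes "density_op \<rho>"
  shows "0 \<le> Re (\<rho> $ i $ i)"
proof -
  have "\<rho> $ i $ i = qform \<rho> (\<chi> k. (if k = i then 1 else 0) + (if k = i then 0 else 0))"
    using qform_two_point[of \<rho> i 1 i 0] by simp
  then show ?thesis
    using assms by (simp add: density_op_def)
qed

lemma nonneg_quadratic_discriminant_le: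
  fixes a b c :: real
  assumes nonneg: "\<And>t. 0 \<le> a * t\<^sup>2 - 2 * b * t + c" and "0 \<le> a"
  shows "b\<^sup>2 \<le> a * c"
proof (cases "a = 0")
  case True
  have "b = 0"
  proof (rule ccontr)
    assume "b \<noteq> 0"
    then show False
      using nonneg[of "(c + 1) / (2 * b)"] True by (simp add: field_simps)
  qed
  then show ?thesis
    using True by simp
next
  case False
  then have "0 < a"
    using \<open>0 \<le> a\<close> by simp
  have "0 \<le> a * (b / a)\<^sup>2 - 2 * b * (b / a) + c"
    by (rule nonneg)
  also have "\<dots> = (a * c - b\<^sup>2) / a"
    using \<open>0 < a\<close> by (simp add: field_simps power2_eq_square)
  finally show ?thesis
    using \<open>0 < a\<close> by (simp add: zero_le_divide_iff)
qed

lemma density_op_entry_bound: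
  assumes "density_op \<rho>"
  shows "(cmod (\<rho> $ i $ j))\<^sup>2 \<le> Re (\<rho> $ i $ i) * Re (\<rho> $ j $ j)"
proof -
  define c where "c = \<rho> $ i $ j"
  have quadratic: "0 \<le> ((cmod c)\<^sup>2 * Re (\<rho> $ j $ j)) * t\<^sup>2 - 2 * (cmod c)\<^sup>2 * t + Re (\<rho> $ i $ i)"
    for t :: real
  proof -
    define s where "s = - of_real t * cnj c"
    have "0 \<le> Re (qform \<rho> (\<chi> k. (if k = i then 1 else 0) + (if k = j then s else 0)))"
      using assms by (simp add: density_op_def)
    also have "qform \<rho> (\<chi> k. (if k = i then 1 else 0) + (if k = j then s else 0))
        = \<rho> $ i $ i + c * s + cnj s * cnj c + cnj s * \<rho> $ j $ j * s"
      using hermitian_entry[of \<rho> j i] assms by (simp add: qform_two_point density_op_def c_def)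
    also have "Re \<dots> = (cmod c)\<^sup>2 * Re (\<rho> $ j $ j) * t\<^sup>2 - 2 * (cmod c)\<^sup>2 * t + Re (\<rho> $ i $ i)"
      unfolding s_def cmod_power2 by (simp add: algebra_simps power2_eq_square)
    finally show ?thesis .
  qed
  have "((cmod c)\<^sup>2)\<^sup>2 \<le> ((cmod c)\<^sup>2 * Re (\<rho> $ j $ j)) * Re (\<rho> $ i $ i)"
    using nonneg_quadratic_discriminant_le[OF quadratic] density_op_diag_nonneg[OF assms] by simp
  then show ?thesis
    using density_op_diag_nonneg[OF assms, of i] density_op_diag_nonneg[OF assms, of j]
    by (cases "c = 0") (auto simp: c_def power2_eq_square mult_ac)
qed

lemma density_op_purity_le_1:
  assumes "density_op \<rho>"
  shows "Re (trace (\<rho> ** \<rho>)) \<le> 1"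
proof -
  have "Re (trace (\<rho> ** \<rho>)) = (\<Sum>i\<in>UNIV. \<Sum>k\<in>UNIV. Re (\<rho> $ i $ k * \<rho> $ k $ i))"
    by (simp add: trace_def matrix_matrix_mult_def)
  also have "\<dots> = (\<Sum>i\<in>UNIV. \<Sum>k\<in>UNIV. (cmod (\<rho> $ i $ k))\<^sup>2)"
  proof -
    have "Re (\<rho> $ i $ k * \<rho> $ k $ i) = (cmod (\<rho> $ i $ k))\<^sup>2" for i k
      using assms hermitian_entry[of \<rho> k i]
      by (simp add: density_op_def complex_mult_cnj cmod_power2)
    then show ?thesis
      by simp
  qed
  also have "\<dots> \<le> (\<Sum>i\<in>UNIV. \<Sum>k\<in>UNIV. Re (\<rho> $ i $ i) * Re (\<rho> $ k $ k))"
    by (intro sum_mono density_op_entry_bound[OF assms])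
  also have "\<dots> = (Re (trace \<rho>))\<^sup>2"
    by (simp add: trace_def sum_product power2_eq_square)
  finally show ?thesis
    using assms by (simp add: density_op_def)
qed

lemma mexp_conj_has_vector_derivative:
  "((\<lambda>t. mexp (t *\<^sub>R K) ** \<rho> ** mexp (- (t *\<^sub>R K))) has_vector_derivative
      commutator K (mexp (t *\<^sub>R K) ** \<rho> ** mexp (- (t *\<^sub>R K)))) (at t)"
proof -
  have right: "((\<lambda>t. mexp (- (t *\<^sub>R K))) has_vector_derivative mexp (- (t *\<^sub>R K)) ** - K) (at t)"
    using mexp_scaleR_has_vector_derivative_right[of "- K"] by simp
  have left: "((\<lambda>t. mexp (t *\<^sub>R K) ** \<rho>) has_vector_derivative (K ** mexp (t *\<^sub>R K)) ** \<rho>) (at t)"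
    by (rule bounded_linear.has_vector_derivative[OF
          bounded_bilinear.bounded_linear_left[OF bounded_bilinear_matrix_matrix_mult]
          mexp_scaleR_has_vector_derivative_left])
  show ?thesis
    using bounded_bilinear.has_vector_derivative[OF bounded_bilinear_matrix_matrix_mult left right]
    by (simp add: commutator_def matrix_mul_assoc matrix_mul_uminus_right)
qed

lemma invertible_mexp_conj: "invertible \<rho> \<Longrightarrow> invertible (mexp K ** \<rho> ** mexp (- K))"
  by (simp add: invertible_mult invertible_mexp)

lemma hermitian_mexp_conj:
  assumes "cadj K = - K" and "hermitian \<rho>"
  shows "hermitian (mexp K ** \<rho> ** mexp (- K))"
  using assms by (simp add: hermitian_def cadj_mult cadj_mexp cadj_uminus matrix_mul_assoc)

lemma trace_square_similar:
  assumes "V ** U = mat 1"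
  shows "trace ((U ** A ** V) ** (U ** A ** V)) = trace (A ** (A::'a::comm_semiring_1^'n^'n))"
proof -
  have "trace ((U ** A ** V) ** (U ** A ** V)) = trace (U ** (A ** A ** V))"
    by (simp add: matrix_mul_assoc assms flip: matrix_mul_assoc[of _ V U])
  also have "\<dots> = trace (A ** A)"
    using assms by (simp add: trace_mul_sym[of U] flip: matrix_mul_assoc)
  finally show ?thesis .
qed

lemma trace_square_mexp_conj:
  "trace ((mexp K ** \<rho> ** mexp (- K)) ** (mexp K ** \<rho> ** mexp (- K))) = trace (\<rho> ** \<rho>)"
  using mexp_mult_mexp_uminus[of "- K"] by (intro trace_square_similar) simp

lemma tendsto_second_order_quotient:
  fixes f f' :: "real \<Rightarrow> real"
  assumes f': "\<And>x. (f has_real_derivative f' x) (at x)"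
    and f'': "(f' has_real_derivative c) (at a)" and "f' a = 0"
  shows "((\<lambda>h. (f (a + h) - f a) / h\<^sup>2) \<longlongrightarrow> c / 2) (at 0)"
proof (rule lhopital[where f' = "\<lambda>h. f' (a + h)" and g' = "\<lambda>h. 2 * h"])
  have "(f \<longlongrightarrow> f a) (at a)"
    using DERIV_isCont[OF f'] by (simp add: isCont_def)
  then show "((\<lambda>h. f (a + h) - f a) \<longlongrightarrow> 0) (at 0)"
    by (intro LIM_zero LIM_offset_zero)
  show "((\<lambda>h::real. h\<^sup>2) \<longlongrightarrow> 0) (at 0)"
    by (auto intro!: tendsto_eq_intros)
  show "\<forall>\<^sub>F h in at 0. h\<^sup>2 \<noteq> (0::real)" "\<forall>\<^sub>F h in at 0. 2 * h \<noteq> (0::real)"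
    by (simp_all add: eventually_at_filter)
  have "((\<lambda>h. f (a + h)) has_real_derivative f' (a + h)) (at h)" for h
    using DERIV_shift[of f "f' (a + h)" h a] f'[of "h + a"] by (simp add: add.commute)
  then show "\<forall>\<^sub>F h in at 0. ((\<lambda>h. f (a + h) - f a) has_real_derivative f' (a + h)) (at h)"
    by (auto intro!: derivative_eq_intros always_eventually)
  show "\<forall>\<^sub>F h in at 0. ((\<lambda>h. h\<^sup>2) has_real_derivative 2 * h) (at h)"
    by (intro always_eventually allI) (auto intro!: derivative_eq_intros)
  have "((\<lambda>h. (f' (a + h) - f' a) / h) \<longlongrightarrow> c) (at 0)"
    using f'' by (simp add: DERIV_def)
  then have "((\<lambda>h. f' (a + h) / h / 2) \<longlongrightarrow> c / 2) (at 0)"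
    using \<open>f' a = 0\<close> by (intro tendsto_divide) simp_all
  then show "((\<lambda>h. f' (a + h) / (2 * h)) \<longlongrightarrow> c / 2) (at 0)"
    by (simp add: mult.commute)
qed

lemma tendsto_one_minus_sqrt_quotient:
  fixes g :: "real \<Rightarrow> real"
  assumes lim: "((\<lambda>h. g h / h\<^sup>2) \<longlongrightarrow> L) (at 0)"
  shows "((\<lambda>h. (1 - sqrt (1 + g h)) / h\<^sup>2) \<longlongrightarrow> - L / 2) (at 0)"
proof -
  have "((\<lambda>h. g h / h\<^sup>2 * h\<^sup>2) \<longlongrightarrow> L * 0\<^sup>2) (at 0)"
    by (intro tendsto_intros lim)
  moreover have "\<forall>\<^sub>F h in at 0. g h / h\<^sup>2 * h\<^sup>2 = g h"
    by (simp add: eventually_at_filter)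
  ultimately have g0: "(g \<longlongrightarrow> 0) (at 0)"
    by (simp add: tendsto_cong)
  then have "((\<lambda>h. - (g h / h\<^sup>2) / (1 + sqrt (1 + g h))) \<longlongrightarrow> - L / (1 + sqrt (1 + 0))) (at 0)"
    by (intro tendsto_intros lim) simp_all
  moreover have "\<forall>\<^sub>F h in at 0. - (g h / h\<^sup>2) / (1 + sqrt (1 + g h)) = (1 - sqrt (1 + g h)) / h\<^sup>2"
  proof -
    have "\<forall>\<^sub>F h in at 0. -1 < g h"
      by (rule order_tendstoD(1)[OF g0]) simp
    then show ?thesis
    proof eventually_elim
      case (elim h)
      have "(1 - sqrt (1 + g h)) * (1 + sqrt (1 + g h)) = - g h"
        using elim by (simp add: algebra_simps)
      moreover have "1 + sqrt (1 + g h) > 0"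
        using elim by (simp add: add_pos_nonneg)
      ultimately have "1 - sqrt (1 + g h) = - g h / (1 + sqrt (1 + g h))"
        by (simp add: field_simps)
      then show ?case
        by (simp add: mult.commute)
    qed
  qed
  ultimately show ?thesis
    by (simp add: tendsto_cong)
qed

lemma super_fidelity_equal_purity:
  assumes "Re (trace (\<sigma> ** \<sigma>)) = p" and "Re (trace (\<tau> ** \<tau>)) = p" and "p \<le> 1"
  shows "super_fidelity \<sigma> \<tau> = 1 + (Re (trace (\<sigma> ** \<tau>)) - p)"
  using assms by (simp add: super_fidelity_def)

lemma bounded_linear_Re_trace_mult: "bounded_linear (\<lambda>X. Re (trace (C ** X)))"
  unfolding linear_conv_bounded_linear[symmetric]
  by (rule linearI)
    (simp_all add: matrix_add_ldistrib trace_add trace_scaleR matrix_scalar_ac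
      flip: scalar_matrix_assoc)

lemma overlap_commutator_flow_second_order:
  fixes X :: "real \<Rightarrow> complex^'n^'n" and a :: real
  assumes flow: "\<And>t. (X has_vector_derivative commutator K (X t)) (at t)"
  defines "D \<equiv> commutator K (X a)"
  shows "((\<lambda>h. (Re (trace (X a ** X (a + h))) - Re (trace (X a ** X a))) / h\<^sup>2)
           \<longlongrightarrow> - Re (trace (D ** D)) / 2) (at 0)"
proof (rule tendsto_second_order_quotient)
  show "((\<lambda>t. Re (trace (X a ** X t))) has_real_derivative
      Re (trace (X a ** commutator K (X t)))) (at t)"
    for t
    unfolding has_real_derivative_iff_has_vector_derivative
    by (rule bounded_linear.has_vector_derivative[OF bounded_linear_Re_trace_mult flow])
  have "((\<lambda>t. Re (trace (X a ** commutator K (X t)))) has_real_derivative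
      Re (trace (X a ** commutator K D))) (at a)"
    unfolding has_real_derivative_iff_has_vector_derivative D_def
    by (intro bounded_linear.has_vector_derivative[OF bounded_linear_Re_trace_mult]
        bounded_linear.has_vector_derivative[OF bounded_linear_commutator] flow)
  moreover have "trace (X a ** commutator K D) = trace (commutator (X a) K ** D)"
    by (rule trace_mult_commutator)
  moreover have "commutator (X a) K = - D"
    by (simp add: D_def commutator_swap[of "X a"])
  ultimately show "((\<lambda>t. Re (trace (X a ** commutator K (X t)))) has_real_derivative
      - Re (trace (D ** D))) (at a)"
    by (simp add: matrix_mul_uminus_left trace_uminus)
  show "Re (trace (X a ** commutator K (X a))) = 0"
    by (simp add: trace_mult_commutator_self)
qed

lemma trace_cadj_right_quotient:
  assumes "hermitian \<sigma>" and "invertible \<sigma>" and "hermitian D"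
  defines "\<Lambda> \<equiv> D ** matrix_inv \<sigma>"
  shows "trace (cadj \<Lambda> ** \<Lambda> ** (\<sigma> ** \<sigma>)) = trace (D ** D)"
proof -
  have "cadj \<Lambda> ** \<Lambda> ** (\<sigma> ** \<sigma>) = matrix_inv \<sigma> ** (D ** D ** \<sigma>)"
    using assms hermitian_matrix_inv[OF assms(1,2)]
    by (simp add: \<Lambda>_def cadj_mult hermitian_def matrix_mul_assoc matrix_mul_matrix_inv
        flip: matrix_mul_assoc[of _ "matrix_inv \<sigma>" \<sigma>])
  also have "trace \<dots> = trace (D ** D)"
    using assms
    by (simp add: trace_mul_sym[of "matrix_inv \<sigma>"] matrix_mul_matrix_inv flip: matrix_mul_assoc)
  finally show ?thesis .
qed

theorem proposition1:
  fixes \<rho> H :: "complex^'n^'n" and \<theta> :: real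
    and \<rho>t :: "real \<Rightarrow> complex^'n^'n"
  assumes "density_op \<rho>" and "invertible \<rho>"
    and "hermitian H"
    and "\<And>t. \<rho>t t = mexp (csmat (- \<i> * complex_of_real t) H) ** \<rho> **
                       mexp (csmat (\<i> * complex_of_real t) H)"
  defines "\<Lambda> \<equiv> vector_derivative \<rho>t (at \<theta>) ** matrix_inv (\<rho>t \<theta>)"
  shows "((\<lambda>\<delta>. complex_of_real
            (8 * (1 - sqrt (super_fidelity (\<rho>t \<theta>) (\<rho>t (\<theta> + \<delta>)))) / \<delta>\<^sup>2))
          \<longlongrightarrow> 2 * trace (cadj \<Lambda> ** \<Lambda> ** (\<rho>t \<theta> ** \<rho>t \<theta>))) (at 0)"
proof -
  define K where "K = csmat (- \<i>) H"
  have K: "cadj (t *\<^sub>R K) = - (t *\<^sub>R K)" for t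
    using assms(3) by (simp add: K_def hermitian_def cadj_def csmat_def vec_eq_iff)
  have "csmat (- \<i> * of_real t) H = t *\<^sub>R K" "csmat (\<i> * of_real t) H = - (t *\<^sub>R K)" for t
    by (simp_all add: K_def csmat_def vec_eq_iff scaleR_conv_of_real[where 'a = complex])
  then have orbit: "\<rho>t t = mexp (t *\<^sub>R K) ** \<rho> ** mexp (- (t *\<^sub>R K))" for t
    using assms(4) by simp
  have flow: "(\<rho>t has_vector_derivative commutator K (\<rho>t t)) (at t)" for t
    unfolding orbit by (rule mexp_conj_has_vector_derivative)
  define \<sigma> D where "\<sigma> = \<rho>t \<theta>" and "D = commutator K \<sigma>"
  have hermitian: "hermitian \<sigma>" "hermitian D"
    using hermitian_mexp_conj[OF K] hermitian_commutator[OF K[of 1]] assms(1)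
    by (simp_all add: \<sigma>_def D_def orbit density_op_def)
  have rhs: "trace (cadj \<Lambda> ** \<Lambda> ** (\<sigma> ** \<sigma>)) = of_real (Re (trace (D ** D)))"
    using trace_cadj_right_quotient[OF hermitian(1) _ hermitian(2)]
      invertible_mexp_conj[OF assms(2)] hermitian_trace_real[of "D ** D"] hermitian(2)
    by (simp add: \<Lambda>_def vector_derivative_at[OF flow] \<sigma>_def D_def orbit hermitian_def cadj_mult)
  have fidelity: "super_fidelity \<sigma> (\<rho>t (\<theta> + \<delta>))
      = 1 + (Re (trace (\<sigma> ** \<rho>t (\<theta> + \<delta>))) - Re (trace (\<sigma> ** \<sigma>)))" for \<delta>
    using density_op_purity_le_1[OF assms(1)]
    by (simp add: super_fidelity_equal_purity \<sigma>_def orbit trace_square_mexp_conj)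
  have "((\<lambda>\<delta>. (1 - sqrt (super_fidelity \<sigma> (\<rho>t (\<theta> + \<delta>)))) / \<delta>\<^sup>2)
      \<longlongrightarrow> Re (trace (D ** D)) / 4) (at 0)"
    unfolding fidelity
    using tendsto_one_minus_sqrt_quotient[OF overlap_commutator_flow_second_order[OF flow]]
    by (simp add: \<sigma>_def D_def)
  from tendsto_mult_left[OF this, of 8]
  have "((\<lambda>\<delta>. 8 * (1 - sqrt (super_fidelity \<sigma> (\<rho>t (\<theta> + \<delta>)))) / \<delta>\<^sup>2)
      \<longlongrightarrow> 2 * Re (trace (D ** D))) (at 0)"
    by simp
  from tendsto_of_real[OF this, where 'a = complex] show ?thesis
    unfolding \<sigma>_def[symmetric] rhs by (simp only: of_real_mult of_real_numeral)
qed

end
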